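(* Fix $L>0$ and $0\le\bar h<h$ (and lane length $d>0$). Then for every $\bar\alpha\in[0,1]$ and every $n\ge1$, $$\frac{n\,c^{UB}(\bar\alpha)}{n\,c(\bar\alpha)}\;\le\;2\,\frac{L+h-\sqrt{(L+h)(L+\bar h)}}{h-\bar h}\;\le\;2,$$ and $$\frac{n\,c^{UB}(\bar\alpha)}{C^*_n(\bar\alpha)}\;\le\;\frac{2n(L+h)}{(2n-1)(L+h)+\sqrt{(L+h)(L+\bar h)}}\;\le\;\frac{2n}{2n-1},$$ where $C^*_n(\bar\alpha)=\max\{C(\boldsymbol{\alpha}):\boldsymbol{\alpha}\in[0,1]^n,\ G(\boldsymbol{\alpha})=0\}$. (Here $n\,c^{UB}(\bar\alpha)$ is the common total upper-bound capacity of every feasible $\boldsymbol\beta$, i.e. $C^{UB}(\boldsymbol\beta^* )$, and $n\,c(\bar\alpha)$ is the worst-case total capacity $C(\boldsymbol\alpha_* )$; thus the first inequality bounds the price of negligence $\Lambda$ and the second bounds the price of no control $\Gamma$.)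
   Context: Model of a road with $n\ge1$ parallel lanes of common length $d>0$. Vehicles have length $L>0$. A vehicle keeps a headway (space gap) $\bar h$ to the vehicle in front of it if both it and the vehicle in front are autonomous, and headway $h$ otherwise, where $0\le \bar h<h$. Set $k_1=(L+h)/d$ and $k_2=(h-\bar h)/d$. The capacity of a lane with autonomy level $\alpha\in[0,1]$ (vehicle types i.i.d. Bernoulli with probability $\alpha$ of being autonomous) is $c(\alpha)=\frac{1}{k_1-k_2\alpha^2}$, and the upper-bound capacity (all autonomous vehicles in the lane platooned together) is $c^{UB}(\beta)=\frac{1}{k_1-k_2\beta}$. Let $\bar\alpha\in[0,1]$ be the overall fraction of autonomous vehicles on the road. For $\boldsymbol{\alpha}\in[0,1]^n$ let $C(\boldsymbol{\alpha})=\sum_{i=1}^n c(\alpha_i)$ and $G(\boldsymbol{\alpha})=\sum_{i=1}^n(\alpha_i-\bar\alpha)c(\alpha_i)$. The price of negligence $\Lambda$ is the supremum over $\bar\alpha,n$ of the ratio of the optimal upper-bound total capacity $C^{UB}(\boldsymbol\beta^* )$ to the minimum of $C$ under $G=0$; the price of no control $\Gamma$ is the supremum over $\bar\alpha,n$ of the ratio of $C^{UB}(\boldsymbol\beta^* )$ to the maximum of $C$ under $G=0$. *)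

theory Defs
  imports Complex_Main
begin

definition k1 :: "real \<Rightarrow> real \<Rightarrow> real \<Rightarrow> real" where
  "k1 L h d = (L + h) / d"

definition k2 :: "real \<Rightarrow> real \<Rightarrow> real \<Rightarrow> real" where
  "k2 h hb d = (h - hb) / d"

text \<open>Lane capacity with autonomy level a (random ordering).\<close>
definition cap :: "real \<Rightarrow> real \<Rightarrow> real \<Rightarrow> real \<Rightarrow> real \<Rightarrow> real" where
  "cap L h hb d a = 1 / (k1 L h d - k2 h hb d * a\<^sup>2)"

text \<open>Upper-bound lane capacity (all autonomous vehicles platooned).\<close>
definition capUB :: "real \<Rightarrow> real \<Rightarrow> real \<Rightarrow> real \<Rightarrow> real \<Rightarrow> real" where
  "capUB L h hb d b = 1 / (k1 L h d - k2 h hb d * b)"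

text \<open>Vectors in [0,1]^n are represented as functions nat => real, only indices i < n matter.\<close>
definition totC :: "real \<Rightarrow> real \<Rightarrow> real \<Rightarrow> real \<Rightarrow> nat \<Rightarrow> (nat \<Rightarrow> real) \<Rightarrow> real" where
  "totC L h hb d n a = (\<Sum>i<n. cap L h hb d (a i))"

definition Gfun :: "real \<Rightarrow> real \<Rightarrow> real \<Rightarrow> real \<Rightarrow> real \<Rightarrow> nat \<Rightarrow> (nat \<Rightarrow> real) \<Rightarrow> real" where
  "Gfun L h hb d abar n a = (\<Sum>i<n. (a i - abar) * cap L h hb d (a i))"

definition feasible :: "real \<Rightarrow> real \<Rightarrow> real \<Rightarrow> real \<Rightarrow> real \<Rightarrow> nat \<Rightarrow> (nat \<Rightarrow> real) \<Rightarrow> bool" where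
  "feasible L h hb d abar n a \<longleftrightarrow>
     (\<forall>i<n. 0 \<le> a i \<and> a i \<le> 1) \<and> Gfun L h hb d abar n a = 0"

text \<open>C*_n(abar) = max of C over feasible vectors (written as a supremum; the max is attained by compactness).\<close>
definition Cstar :: "real \<Rightarrow> real \<Rightarrow> real \<Rightarrow> real \<Rightarrow> real \<Rightarrow> nat \<Rightarrow> real" where
  "Cstar L h hb d abar n = Sup {totC L h hb d n a | a. feasible L h hb d abar n a}"

end

theory Submission
  imports Defs
begin

text \<open>With \<open>A = L + h\<close>, \<open>B = L + hb\<close>, \<open>D = h - hb\<close> and \<open>s = sqrt (A * B)\<close>, a lane
  has capacity \<open>d / (A - D x\<^sup>2)\<close> and upper-bound capacity \<open>d / (A - D x)\<close>. Both bounds rest on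
  \<open>(A - D x\<^sup>2) (A + s) \<le> 2 A (A - D x)\<close> for \<open>x \<in> [0,1]\<close>, a rearrangement of
  \<open>(A - D x - s)\<^sup>2 \<ge> 0\<close>. It bounds the price of negligence directly. For the price of no
  control, the intermediate value theorem yields a feasible vector that fills the lanes one
  after another, so that at most one lane is partially autonomous. For any feasible vector the
  constraint \<open>G = 0\<close> gives \<open>(A - D abar) C = n d - D \<Sum>\<^sub>i x\<^sub>i (1 - x\<^sub>i) c(x\<^sub>i)\<close>, and here
  only the partial lane contributes to the sum; the same inequality bounds its term by
  \<open>d (A - s) / (2 A D)\<close>.\<close>

lemma cap_eq_divide: "d > 0 \<Longrightarrow> cap L h hb d x = d / (L + h - (h - hb) * x\<^sup>2)"
  by (simp add: cap_def k1_def k2_def diff_divide_distrib[symmetric])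

lemma capUB_eq_divide: "d > 0 \<Longrightarrow> capUB L h hb d x = d / (L + h - (h - hb) * x)"
  by (simp add: capUB_def k1_def k2_def diff_divide_distrib[symmetric])

lemma denominators_ge:
  fixes A B D x :: real
  assumes "A = B + D" "0 \<le> D" "0 \<le> x" "x \<le> 1"
  shows "B \<le> A - D * x\<^sup>2" and "B \<le> A - D * x"
proof -
  have "x\<^sup>2 \<le> 1" using assms(3,4) by (simp add: power_le_one)
  then show "B \<le> A - D * x\<^sup>2" using assms(1,2) mult_left_le[of "x\<^sup>2" D] by simp
  show "B \<le> A - D * x" using assms mult_left_le[of x D] by simp
qed

lemma denominator_ratio_bound:
  fixes A B D x :: real
  assumes "A = B + D" "0 < B" "0 < D" "0 \<le> x" "x \<le> 1"
  shows "(A - D * x\<^sup>2) * (A + sqrt (A * B)) \<le> 2 * A * (A - D * x)"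
proof -
  define s where "s = sqrt (A * B)"
  define t where "t = A - D * x"
  have s2: "s\<^sup>2 = A * B" and s0: "0 \<le> s"
    using assms(1-3) by (simp_all add: s_def)
  have "D * (A - D * x\<^sup>2) = 2 * A * t - t\<^sup>2 - A * B"
    unfolding t_def using assms(1) by (simp add: power2_eq_square algebra_simps)
  also have "\<dots> \<le> 2 * (A - s) * t"
    using s2 zero_le_power2[of "t - s"] by (simp add: power2_eq_square algebra_simps)
  finally have "D * (A - D * x\<^sup>2) * (A + s) \<le> 2 * (A - s) * t * (A + s)"
    using assms(1-3) s0 by (intro mult_right_mono) auto
  also have "\<dots> = 2 * t * ((A - s) * (A + s))"
    by (simp add: algebra_simps)
  also have "(A - s) * (A + s) = A * D"
    using s2 assms(1) by (simp add: power2_eq_square algebra_simps)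
  also have "2 * t * (A * D) = D * (2 * A * t)"
    by simp
  finally show ?thesis
    using assms(3) by (simp add: s_def t_def mult.assoc)
qed

lemma lane_surplus_bound:
  fixes A B D x :: real
  assumes "A = B + D" "0 < B" "0 < D" "0 \<le> x" "x \<le> 1"
  shows "2 * A * D * (x * (1 - x)) \<le> (A - sqrt (A * B)) * (A - D * x\<^sup>2)"
  using denominator_ratio_bound[OF assms] by (simp add: power2_eq_square algebra_simps)

lemma weighted_deviation_split:
  fixes A D x abar c d :: real
  assumes "D \<noteq> 0" "c * (A - D * x\<^sup>2) = d"
  shows "(x - abar) * c = ((A - D * abar) * c - d) / D + x * (1 - x) * c"
proof -
  have "((A - D * abar) * c - d) / D = x\<^sup>2 * c - abar * c"
    using assms by (simp add: field_simps power2_eq_square)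
  then show ?thesis by (simp add: algebra_simps power2_eq_square)
qed

definition staircase :: "real \<Rightarrow> nat \<Rightarrow> real" where
  "staircase t i = max 0 (min 1 (t - real i))"

lemma staircase_bounds: "0 \<le> staircase t i" "staircase t i \<le> 1"
  by (simp_all add: staircase_def)

lemma staircase_fractional_index:
  assumes "0 < staircase t i" "staircase t i < 1"
  shows "i = nat \<lfloor>t\<rfloor>"
proof -
  have "0 < t - real i" "t - real i < 1"
    using assms by (auto simp: staircase_def max_def min_def split: if_splits)
  then have "\<lfloor>t\<rfloor> = int i" by (simp add: floor_eq_iff)
  then show ?thesis by simp
qed

lemma sum_staircase_le:
  fixes f :: "real \<Rightarrow> real"
  assumes "f 0 = 0" "f 1 = 0" "\<And>x. 0 \<le> x \<Longrightarrow> x \<le> 1 \<Longrightarrow> f x \<le> M" "0 \<le> M"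
  shows "(\<Sum>i<n. f (staircase t i)) \<le> M"
proof -
  define k where "k = nat \<lfloor>t\<rfloor>"
  have "f (staircase t i) = 0" if "i \<noteq> k" for i
  proof -
    have "staircase t i = 0 \<or> staircase t i = 1"
      using staircase_fractional_index[of t i] staircase_bounds[of t i] that
      unfolding k_def by linarith
    then show ?thesis using assms(1,2) by auto
  qed
  then have "(\<Sum>i<n. f (staircase t i)) = (\<Sum>i\<in>{..<n} \<inter> {k}. f (staircase t i))"
    by (intro sum.mono_neutral_right) auto
  also have "\<dots> \<le> M"
    using assms(3,4) staircase_bounds[of t k] by (cases "k < n") auto
  finally show ?thesis .
qed

locale road =
  fixes L h hb d :: real
  assumes L_pos: "0 < L" and hb_nonneg: "0 \<le> hb" and hb_less_h: "hb < h" and d_pos: "0 < d"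
begin

lemma road_pos: "0 < L + hb" "0 < h - hb" "0 < L + h"
  using L_pos hb_nonneg hb_less_h by simp_all

lemma cap_denominator_ge:
  "0 \<le> x \<Longrightarrow> x \<le> 1 \<Longrightarrow> L + hb \<le> L + h - (h - hb) * x\<^sup>2"
  using denominators_ge(1)[of "L + h" "L + hb" "h - hb" x] road_pos(2) by simp

lemma cap_mult_denominator:
  "0 \<le> x \<Longrightarrow> x \<le> 1 \<Longrightarrow> cap L h hb d x * (L + h - (h - hb) * x\<^sup>2) = d"
  using cap_denominator_ge[of x] road_pos(1) by (simp add: cap_eq_divide[OF d_pos])

lemma cap_pos: "0 \<le> x \<Longrightarrow> x \<le> 1 \<Longrightarrow> 0 < cap L h hb d x"
  using cap_denominator_ge[of x] road_pos(1) d_pos by (simp add: cap_eq_divide)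

lemma cap_le:
  assumes "0 \<le> x" "x \<le> 1"
  shows "cap L h hb d x \<le> d / (L + hb)"
proof -
  have "L + hb \<le> L + h - (h - hb) * x\<^sup>2" using cap_denominator_ge[OF assms] .
  then show ?thesis
    unfolding cap_eq_divide[OF d_pos]
    using road_pos(1) d_pos by (intro divide_left_mono mult_pos_pos) auto
qed

lemma totC_le_Cstar:
  assumes "feasible L h hb d abar n a"
  shows "totC L h hb d n a \<le> Cstar L h hb d abar n"
proof -
  have "totC L h hb d n b \<le> real n * (d / (L + hb))" if "feasible L h hb d abar n b" for b
  proof -
    have "totC L h hb d n b \<le> (\<Sum>i<n. d / (L + hb))"
      unfolding totC_def using that cap_le by (intro sum_mono) (auto simp: feasible_def)
    then show ?thesis by simp
  qed
  then have "bdd_above {totC L h hb d n a | a. feasible L h hb d abar n a}"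
    by (intro bdd_aboveI) blast
  then show ?thesis
    unfolding Cstar_def using assms by (intro cSup_upper) auto
qed

lemma continuous_Gfun_staircase:
  "continuous_on S (\<lambda>t. Gfun L h hb d abar n (staircase t))"
proof -
  have "L + h - (h - hb) * (max 0 (min 1 (t - real i)))\<^sup>2 \<noteq> 0" for t i
    using cap_denominator_ge[OF staircase_bounds[of t i]] road_pos(1)
    by (simp add: staircase_def)
  then show ?thesis
    unfolding Gfun_def cap_eq_divide[OF d_pos] staircase_def
    by (intro continuous_intros) auto
qed

lemma exists_feasible_staircase:
  assumes "0 \<le> abar" "abar \<le> 1"
  obtains t where "feasible L h hb d abar n (staircase t)"
proof -
  define G where "G t = Gfun L h hb d abar n (staircase t)" for t
  have "G 0 = (\<Sum>i<n. - abar * cap L h hb d 0)"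
    unfolding G_def Gfun_def by (intro sum.cong) (auto simp: staircase_def)
  also have "\<dots> \<le> 0"
    using assms(1) d_pos road_pos by (simp add: cap_eq_divide mult_nonneg_nonneg)
  finally have "G 0 \<le> 0" .
  have "G (real n) = (\<Sum>i<n. (1 - abar) * cap L h hb d 1)"
    unfolding G_def Gfun_def by (intro sum.cong) (auto simp: staircase_def)
  also have "\<dots> \<ge> 0"
    using assms(2) d_pos road_pos by (simp add: cap_eq_divide)
  finally have "0 \<le> G (real n)" .
  obtain t where "G t = 0"
    using IVT'[of G 0 0 "real n"] \<open>G 0 \<le> 0\<close> \<open>0 \<le> G (real n)\<close>
      continuous_Gfun_staircase[of "{0..real n}"]
    by (auto simp: G_def)
  then show ?thesis
    using that staircase_bounds by (auto simp: feasible_def G_def)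
qed

lemma lane_surplus_le:
  assumes "0 \<le> x" "x \<le> 1"
  shows "x * (1 - x) * cap L h hb d x
           \<le> d * (L + h - sqrt ((L + h) * (L + hb))) / (2 * (L + h) * (h - hb))"
proof -
  define A B D where "A = L + h" and "B = L + hb" and "D = h - hb"
  define s where "s = sqrt (A * B)"
  have AB: "A = B + D" "0 < B" "0 < D" and A0: "0 < A"
    using road_pos by (auto simp: A_def B_def D_def)
  have "2 * A * D * (x * (1 - x) * cap L h hb d x)
          \<le> (A - s) * (A - D * x\<^sup>2) * cap L h hb d x"
    using lane_surplus_bound[OF AB assms] cap_pos[OF assms]
    by (simp add: s_def mult.assoc[symmetric] mult_right_mono)
  also have "\<dots> = (A - s) * d"
    using cap_mult_denominator[OF assms] by (simp add: A_def D_def ac_simps)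
  finally have "x * (1 - x) * cap L h hb d x \<le> d * (A - s) / (2 * A * D)"
    using A0 AB(3) by (simp add: field_simps)
  then show ?thesis
    unfolding A_def B_def D_def s_def .
qed

lemma feasible_totC_eq:
  assumes "feasible L h hb d abar n a"
  shows "(L + h - (h - hb) * abar) * totC L h hb d n a
           = real n * d - (\<Sum>i<n. a i * (1 - a i) * cap L h hb d (a i)) * (h - hb)"
proof -
  define A D where "A = L + h" and "D = h - hb"
  define q where "q x = x * (1 - x) * cap L h hb d x" for x
  have lane: "(a i - abar) * cap L h hb d (a i)
          = ((A - D * abar) * cap L h hb d (a i) - d) / D + q (a i)" if "i < n" for i
    unfolding q_def
  proof (rule weighted_deviation_split)
    show "D \<noteq> 0" using road_pos(2) by (simp add: D_def)
    show "cap L h hb d (a i) * (A - D * (a i)\<^sup>2) = d"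
      using assms that cap_mult_denominator by (simp add: A_def D_def feasible_def)
  qed
  have "0 = (\<Sum>i<n. (a i - abar) * cap L h hb d (a i))"
    using assms by (simp add: feasible_def Gfun_def)
  also have "\<dots> = (\<Sum>i<n. ((A - D * abar) * cap L h hb d (a i) - d) / D + q (a i))"
    using lane by (intro sum.cong) auto
  also have "\<dots> = ((A - D * abar) * totC L h hb d n a - real n * d) / D + (\<Sum>i<n. q (a i))"
    by (simp add: totC_def sum.distrib sum_subtractf sum_distrib_left sum_divide_distrib
        diff_divide_distrib)
  finally have "((A - D * abar) * totC L h hb d n a - real n * d) / D = - (\<Sum>i<n. q (a i))"
    by linarith
  then have "(A - D * abar) * totC L h hb d n a = real n * d - (\<Sum>i<n. q (a i)) * D"
    using road_pos(2) by (simp add: divide_eq_eq D_def)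
  then show ?thesis
    unfolding A_def D_def q_def .
qed

lemma totC_feasible_staircase_ge:
  assumes "feasible L h hb d abar n (staircase t)"
  shows "d * ((2 * real n - 1) * (L + h) + sqrt ((L + h) * (L + hb))) / (2 * (L + h))
           \<le> (L + h - (h - hb) * abar) * totC L h hb d n (staircase t)"
proof -
  define A B D where "A = L + h" and "B = L + hb" and "D = h - hb"
  define s where "s = sqrt (A * B)"
  define Q where "Q = d * (A - s) / (2 * A * D)"
  have A0: "0 < A" and D0: "0 < D"
    using road_pos by (simp_all add: A_def D_def)
  have "s \<le> A"
    using real_sqrt_le_mono[of "A * B" "A * A"] road_pos A0 by (simp add: s_def B_def A_def)
  then have "(\<Sum>i<n. staircase t i * (1 - staircase t i) * cap L h hb d (staircase t i)) \<le> Q"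
    using lane_surplus_le d_pos A0 D0
    by (intro sum_staircase_le) (simp_all add: Q_def A_def B_def D_def s_def)
  then have "(A - D * abar) * totC L h hb d n (staircase t) \<ge> real n * d - Q * D"
    using feasible_totC_eq[OF assms] D0 mult_right_mono by (fastforce simp: A_def D_def)
  moreover have "real n * d - Q * D = d * ((2 * real n - 1) * A + s) / (2 * A)"
    using A0 D0 by (simp add: Q_def field_simps)
  ultimately show ?thesis
    unfolding A_def B_def D_def s_def by simp
qed

lemma price_of_negligence_bound:
  assumes "0 \<le> abar" "abar \<le> 1"
  shows "capUB L h hb d abar / cap L h hb d abar
           \<le> 2 * (L + h - sqrt ((L + h) * (L + hb))) / (h - hb)"
proof -
  define A B D where "A = L + h" and "B = L + hb" and "D = h - hb"
  define s where "s = sqrt (A * B)"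
  have AB: "A = B + D" "0 < B" "0 < D" and A0: "0 < A" and s0: "0 \<le> s"
    using road_pos by (auto simp: A_def B_def D_def s_def)
  have den: "B \<le> A - D * abar\<^sup>2" "B \<le> A - D * abar"
    using denominators_ge[OF AB(1) _ assms] AB(3) by auto
  have "capUB L h hb d abar / cap L h hb d abar = (A - D * abar\<^sup>2) / (A - D * abar)"
    using den AB(2) d_pos
    by (simp add: cap_eq_divide capUB_eq_divide flip: A_def D_def)
  also have "\<dots> \<le> 2 * A / (A + s)"
  proof -
    have "0 < A - D * abar" "0 < A + s" using den AB(2) A0 s0 by linarith+
    then show ?thesis
      using denominator_ratio_bound[OF AB assms] by (simp add: s_def divide_simps)
  qed
  also have "\<dots> = 2 * (A - s) / D"
  proof -
    have "s\<^sup>2 = A * B" using AB(2) A0 by (simp add: s_def)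
    then have "(A - s) * (A + s) = A * D"
      using AB(1) by (simp add: algebra_simps power2_eq_square)
    then show ?thesis using A0 s0 AB(3) by (simp add: field_simps)
  qed
  finally show ?thesis by (simp add: A_def B_def D_def s_def)
qed

lemma price_of_negligence_bound_le_two:
  "2 * (L + h - sqrt ((L + h) * (L + hb))) / (h - hb) \<le> 2"
proof -
  have "L + hb \<le> sqrt ((L + h) * (L + hb))"
    using road_pos by (intro real_le_rsqrt) (simp add: power2_eq_square)
  then show ?thesis using hb_less_h by (simp add: field_simps)
qed

lemma price_of_no_control_bound:
  assumes "0 \<le> abar" "abar \<le> 1" "1 \<le> n"
  shows "real n * capUB L h hb d abar / Cstar L h hb d abar n
           \<le> 2 * real n * (L + h) / ((2 * real n - 1) * (L + h) + sqrt ((L + h) * (L + hb)))"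
proof -
  define A B D where "A = L + h" and "B = L + hb" and "D = h - hb"
  define X where "X = (2 * real n - 1) * A + sqrt (A * B)"
  define u where "u = A - D * abar"
  have A0: "0 < A" using road_pos by (simp add: A_def B_def D_def)
  have X0: "0 < X"
    using A0 assms(3) road_pos by (simp add: X_def A_def B_def add_pos_nonneg)
  have u0: "0 < u"
    using denominators_ge(2)[of A B D abar] assms(1,2) road_pos
    by (simp add: u_def A_def B_def D_def)
  obtain t where t: "feasible L h hb d abar n (staircase t)"
    using exists_feasible_staircase[OF assms(1,2)] .
  have "d * X / (2 * A) \<le> u * totC L h hb d n (staircase t)"
    using totC_feasible_staircase_ge[OF t] by (simp add: X_def u_def A_def B_def D_def)
  also have "\<dots> \<le> u * Cstar L h hb d abar n"
    using totC_le_Cstar[OF t] u0 by simp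
  finally have low: "d * X / (2 * A) \<le> u * Cstar L h hb d abar n" .
  have "real n * capUB L h hb d abar / Cstar L h hb d abar n
          = real n * d / (u * Cstar L h hb d abar n)"
    using d_pos by (simp add: capUB_eq_divide u_def A_def D_def)
  also have "\<dots> \<le> real n * d / (d * X / (2 * A))"
  proof -
    have lower_pos: "0 < d * X / (2 * A)" using d_pos A0 X0 by simp
    then have "0 < u * Cstar L h hb d abar n" using low by linarith
    then show ?thesis
      using low d_pos mult_pos_pos[OF _ lower_pos] by (intro divide_left_mono) auto
  qed
  also have "\<dots> = 2 * real n * A / X"
    using d_pos A0 X0 by (simp add: field_simps)
  finally show ?thesis by (simp add: X_def A_def B_def)
qed

lemma price_of_no_control_bound_le:
  assumes "1 \<le> n"
  shows "2 * real n * (L + h) / ((2 * real n - 1) * (L + h) + sqrt ((L + h) * (L + hb)))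
           \<le> 2 * real n / (2 * real n - 1)"
proof -
  have "2 * real n * (L + h) / ((2 * real n - 1) * (L + h) + sqrt ((L + h) * (L + hb)))
          \<le> 2 * real n * (L + h) / ((2 * real n - 1) * (L + h))"
  proof (rule frac_le)
    show "0 < (2 * real n - 1) * (L + h)" using assms road_pos(3) by simp
  qed (use road_pos(1,3) in simp_all)
  also have "\<dots> = 2 * real n / (2 * real n - 1)"
    using road_pos by simp
  finally show ?thesis .
qed

end

theorem theorem3:
  fixes L h hb d abar :: real and n :: nat
  assumes "L > 0" and "0 \<le> hb" and "hb < h" and "d > 0"
    and "0 \<le> abar" and "abar \<le> 1" and "n \<ge> 1"
  shows "(real n * capUB L h hb d abar) / (real n * cap L h hb d abar)
           \<le> 2 * (L + h - sqrt ((L + h) * (L + hb))) / (h - hb)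
       \<and> 2 * (L + h - sqrt ((L + h) * (L + hb))) / (h - hb) \<le> 2
       \<and> (real n * capUB L h hb d abar) / Cstar L h hb d abar n
           \<le> 2 * real n * (L + h) / ((2 * real n - 1) * (L + h) + sqrt ((L + h) * (L + hb)))
       \<and> 2 * real n * (L + h) / ((2 * real n - 1) * (L + h) + sqrt ((L + h) * (L + hb)))
           \<le> 2 * real n / (2 * real n - 1)"
proof -
  interpret road L h hb d
    using assms(1-4) by unfold_locales
  have "(real n * capUB L h hb d abar) / (real n * cap L h hb d abar)
          = capUB L h hb d abar / cap L h hb d abar"
    using assms(7) by simp
  then show ?thesis
    using price_of_negligence_bound price_of_negligence_bound_le_two
      price_of_no_control_bound price_of_no_control_bound_le assms(5-7)
    by simp
qed

end
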